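(* Let $n\ge3$ and let $\sigma$ be an asymptotically flat Riemannian metric on the complement of a ball in $\mathbb{R}^n$. For any $h>0$ and any $r_1>0$ there exist $r_0\ge r_1$, depending only on $\sigma$, and a rotationally symmetric function $b\colon\mathbb{R}^n\setminus B_{r_0}(0)\to\mathbb{R}$ such that (i) $b>0$; (ii) $b(x)\to0$ as $|x|\to\infty$; (iii) $b(x)\ge h$ for $|x|=r_0$; (iv) $g^{ij}(\sigma,\nabla b)\,{}^\sigma\nabla^2_{ij}b\le0$, i.e. $b$ is a static supersolution.
   Context: Asymptotic flatness: $|\sigma_{ij}-\delta_{ij}|\lesssim\omega(r)$ and $|\partial\sigma_{ij}|\lesssim\omega(r)/r$ for large $r=|x|$, where $\omega$ is bounded with $\omega(r)\to0$ as $r\to\infty$. For $|\nabla w|_\sigma<1$, $g^{ij}(\sigma,\nabla w)=\sigma^{ij}+\frac{\sigma^{ik}\sigma^{jl}w_kw_l}{1-\sigma^{kl}w_kw_l}$, and ${}^\sigma\nabla^2_{ij}w=w_{ij}-\Gamma^k_{ij}w_k$ is the Hessian with respect to $\sigma$. *)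

theory Defs
  imports "HOL-Analysis.Analysis"
begin

text \<open>A metric sigma on the exterior region {x. norm x > R} of R^n, given as a
  matrix-valued function; dsig x i j k is the partial derivative d_k sigma_ij at x.\<close>

definition riemannian_metric_outside ::
  "real \<Rightarrow> (real^'n \<Rightarrow> real^'n^'n) \<Rightarrow> (real^'n \<Rightarrow> 'n \<Rightarrow> 'n \<Rightarrow> 'n \<Rightarrow> real) \<Rightarrow> bool" where
  "riemannian_metric_outside R sig dsig \<longleftrightarrow>
     (\<forall>x. norm x > R \<longrightarrow>
        transpose (sig x) = sig x \<and>
        (\<forall>v. v \<noteq> 0 \<longrightarrow> v \<bullet> (sig x *v v) > 0) \<and>
        (\<forall>i j. ((\<lambda>y. sig y $ i $ j) has_derivative
                 (\<lambda>v. \<Sum>k\<in>UNIV. dsig x i j k * v $ k)) (at x))) \<and>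
     (\<forall>i j k. continuous_on {x. norm x > R} (\<lambda>x. dsig x i j k))"

definition asymptotically_flat ::
  "(real^'n \<Rightarrow> real^'n^'n) \<Rightarrow> (real^'n \<Rightarrow> 'n \<Rightarrow> 'n \<Rightarrow> 'n \<Rightarrow> real) \<Rightarrow> bool" where
  "asymptotically_flat sig dsig \<longleftrightarrow>
     (\<exists>(\<omega>::real \<Rightarrow> real) C R1. bounded (range \<omega>) \<and> (\<omega> \<longlongrightarrow> 0) at_top \<and>
        (\<forall>x. norm x \<ge> R1 \<longrightarrow>
           (\<forall>i j. \<bar>sig x $ i $ j - (if i = j then 1 else 0)\<bar> \<le> C * \<omega> (norm x)) \<and>
           (\<forall>i j k. \<bar>dsig x i j k\<bar> \<le> C * \<omega> (norm x) / norm x)))"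

definition sinv :: "(real^'n \<Rightarrow> real^'n^'n) \<Rightarrow> real^'n \<Rightarrow> 'n \<Rightarrow> 'n \<Rightarrow> real" where
  "sinv sig x i j = matrix_inv (sig x) $ i $ j"

definition sq_norm_sig :: "(real^'n \<Rightarrow> real^'n^'n) \<Rightarrow> real^'n \<Rightarrow> real^'n \<Rightarrow> real" where
  "sq_norm_sig sig x p = (\<Sum>k\<in>UNIV. \<Sum>l\<in>UNIV. sinv sig x k l * p $ k * p $ l)"

definition g_inv :: "(real^'n \<Rightarrow> real^'n^'n) \<Rightarrow> real^'n \<Rightarrow> real^'n \<Rightarrow> 'n \<Rightarrow> 'n \<Rightarrow> real" where
  "g_inv sig x p i j = sinv sig x i j +
     (\<Sum>k\<in>UNIV. \<Sum>l\<in>UNIV. sinv sig x i k * sinv sig x j l * p $ k * p $ l)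
       / (1 - sq_norm_sig sig x p)"

definition christoffel ::
  "(real^'n \<Rightarrow> real^'n^'n) \<Rightarrow> (real^'n \<Rightarrow> 'n \<Rightarrow> 'n \<Rightarrow> 'n \<Rightarrow> real) \<Rightarrow> real^'n \<Rightarrow> 'n \<Rightarrow> 'n \<Rightarrow> 'n \<Rightarrow> real" where
  "christoffel sig dsig x k i j =
     (1/2) * (\<Sum>l\<in>UNIV. sinv sig x k l * (dsig x j l i + dsig x i l j - dsig x i j l))"

text \<open>sigma-Hessian: w_ij - Gamma^k_ij w_k, given gradient p and coordinate Hessian H.\<close>
definition sig_hessian ::
  "(real^'n \<Rightarrow> real^'n^'n) \<Rightarrow> (real^'n \<Rightarrow> 'n \<Rightarrow> 'n \<Rightarrow> 'n \<Rightarrow> real) \<Rightarrow> real^'n \<Rightarrow> real^'n \<Rightarrow> real^'n^'n \<Rightarrow> 'n \<Rightarrow> 'n \<Rightarrow> real" where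
  "sig_hessian sig dsig x p H i j = H $ i $ j - (\<Sum>k\<in>UNIV. christoffel sig dsig x k i j * p $ k)"

definition static_operator ::
  "(real^'n \<Rightarrow> real^'n^'n) \<Rightarrow> (real^'n \<Rightarrow> 'n \<Rightarrow> 'n \<Rightarrow> 'n \<Rightarrow> real) \<Rightarrow> real^'n \<Rightarrow> real^'n \<Rightarrow> real^'n^'n \<Rightarrow> real" where
  "static_operator sig dsig x p H =
     (\<Sum>i\<in>UNIV. \<Sum>j\<in>UNIV. g_inv sig x p i j * sig_hessian sig dsig x p H i j)"

end

theory Submission
  imports Defs
begin

text \<open>The barrier is b = A |x| powr (-alpha) with 0 < alpha <= 1/4, normalised by b = h on
  |x| = r0, and with alpha <= r0 / (2 h) so that |grad b| <= 1/2.  Writing x = r u with |u| = 1, its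
  gradient is -q u and its Hessian is Q ((alpha + 2) u u^T - I), where q = |grad b| and Q = q / r.
  For the Euclidean metric the static operator equals
  Q (alpha + 2 - n + q^2 (alpha + 1) / (1 - q^2)), which is at most -Q/3 because n >= 3.
  Asymptotic flatness makes sigma^ij - delta^ij and |x| Gamma uniformly small beyond a radius that
  does not depend on h; entrywise, the resulting errors in g^ij and in the Christoffel term are then
  a small multiple of Q, so the sign survives.\<close>

lemma abs_sum_le_card_mult:
  fixes F :: "'n::finite \<Rightarrow> real"
  assumes "\<And>i. \<bar>F i\<bar> \<le> B"
  shows "\<bar>\<Sum>i\<in>UNIV. F i\<bar> \<le> real CARD('n) * B"
proof -
  have "\<bar>\<Sum>i\<in>UNIV. F i\<bar> \<le> (\<Sum>i\<in>UNIV. \<bar>F i\<bar>)" by (rule sum_abs)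
  also have "\<dots> \<le> (\<Sum>i\<in>(UNIV::'n set). B)" by (intro sum_mono assms)
  finally show ?thesis by simp
qed

lemma abs_double_sum_le_card_mult:
  fixes F :: "'n::finite \<Rightarrow> 'n \<Rightarrow> real"
  assumes "\<And>i j. \<bar>F i j\<bar> \<le> B"
  shows "\<bar>\<Sum>i\<in>UNIV. \<Sum>j\<in>UNIV. F i j\<bar> \<le> real CARD('n)^2 * B"
proof -
  have "\<bar>\<Sum>i\<in>UNIV. \<Sum>j\<in>UNIV. F i j\<bar> \<le> real CARD('n) * (real CARD('n) * B)"
    by (rule abs_sum_le_card_mult, rule abs_sum_le_card_mult, rule assms)
  then show ?thesis by (simp add: power2_eq_square)
qed

lemma abs_double_sum_mult_le:
  fixes a b :: "'n::finite \<Rightarrow> 'n \<Rightarrow> real"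
  assumes a: "\<And>i j. \<bar>a i j\<bar> \<le> A" and b: "\<And>i j. \<bar>b i j\<bar> \<le> B"
  shows "\<bar>\<Sum>i\<in>UNIV. \<Sum>j\<in>UNIV. a i j * b i j\<bar> \<le> real CARD('n)^2 * (A * B)"
proof (rule abs_double_sum_le_card_mult)
  fix i j
  show "\<bar>a i j * b i j\<bar> \<le> A * B"
    unfolding abs_mult using a [of i j] b [of i j] by (intro mult_mono) (auto intro: order_trans [OF abs_ge_zero])
qed

lemma sum_kronecker_diag:
  fixes F :: "'n::finite \<Rightarrow> 'n \<Rightarrow> real"
  shows "(\<Sum>i\<in>UNIV. \<Sum>j\<in>UNIV. (if i = j then 1 else 0) * F i j) = (\<Sum>i\<in>UNIV. F i i)"
  by (simp add: mult_if_delta)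

lemma one_le_card_real: "1 \<le> real CARD('n::finite)"
  by (simp add: Suc_leI)

lemma small_slope_bounds:
  fixes q :: real
  assumes "0 \<le> q" "q \<le> 1/2"
  shows "q^2 \<le> 1/4" "0 \<le> q^2 / (1 - q^2)" "q^2 / (1 - q^2) \<le> 1/3"
proof -
  show "q^2 \<le> 1/4"
    using power_mono [OF assms(2,1), of 2] by (simp add: power2_eq_square)
  then show "0 \<le> q^2 / (1 - q^2)" "q^2 / (1 - q^2) \<le> 1/3"
    using frac_le [of "q^2" "1/4" "3/4" "1 - q^2"] by simp_all
qed

lemma abs_divide_diff_le:
  fixes X Y D E d e :: real
  assumes "0 < d" "d \<le> D" "0 < e" "e \<le> E"
  shows "\<bar>X / D - Y / E\<bar> \<le> \<bar>X - Y\<bar> / d + \<bar>Y\<bar> * \<bar>E - D\<bar> / (d * e)"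
proof -
  have "X / D - Y / E = (X - Y) / D + Y * (E - D) / (D * E)"
    using assms by (simp add: field_simps)
  then have "\<bar>X / D - Y / E\<bar> \<le> \<bar>X - Y\<bar> / D + \<bar>Y\<bar> * \<bar>E - D\<bar> / (D * E)"
    using assms by (simp add: abs_mult abs_triangle_ineq [THEN order_trans])
  also have "\<dots> \<le> \<bar>X - Y\<bar> / d + \<bar>Y\<bar> * \<bar>E - D\<bar> / (d * e)"
    using assms by (intro add_mono divide_left_mono mult_mono) auto
  finally show ?thesis .
qed

lemma matrix_inv_left:
  fixes M :: "'a::semiring_1^'n^'n"
  assumes "invertible M"
  shows "matrix_inv M ** M = mat 1"
  using someI_ex[OF assms[unfolded invertible_def]] unfolding matrix_inv_def by simp

lemma invertible_if_pos_def:
  fixes M :: "real^'n^'n"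
  assumes "\<And>v. v \<noteq> 0 \<Longrightarrow> v \<bullet> (M *v v) > 0"
  shows "invertible M"
  unfolding invertible_left_inverse matrix_left_invertible_ker
  using assms by (metis inner_zero_right less_irrefl)

text \<open>For P the inverse of M, the identity P - I = - P (M - I) first bounds the absolute row sums
  of P by 2, and then the entries of P - I by 2 d.\<close>

lemma matrix_inv_near_identity:
  fixes M :: "real^'n^'n"
  assumes inv: "invertible M"
    and M: "\<And>i j. \<bar>M$i$j - (if i = j then 1 else 0)\<bar> \<le> d"
    and d: "0 \<le> d" "real CARD('n) * d \<le> 1/2"
  shows "\<bar>matrix_inv M $ i $ j - (if i = j then 1 else 0)\<bar> \<le> 2 * d"
proof -
  define P where "P = matrix_inv M"
  define rowsum where "rowsum i = (\<Sum>k\<in>UNIV. \<bar>P$i$k\<bar>)" for i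
  have entry: "P$i$j - (if i = j then 1 else 0) = - (\<Sum>k\<in>UNIV. P$i$k * (M$k$j - (if k = j then 1 else 0)))"
    for i j
  proof -
    have "(if i = j then 1 else 0) = (P ** M)$i$j"
      using matrix_inv_left[OF inv] by (simp add: P_def mat_def)
    also have "\<dots> = P$i$j + (\<Sum>k\<in>UNIV. P$i$k * (M$k$j - (if k = j then 1 else 0)))"
      by (simp add: matrix_matrix_mult_def right_diff_distrib sum_subtractf if_distrib [of "(*) _"]
          sum.delta')
    finally show ?thesis by linarith
  qed
  have entry_le: "\<bar>P$i$j - (if i = j then 1 else 0)\<bar> \<le> d * rowsum i" for i j
  proof -
    have "\<bar>P$i$j - (if i = j then 1 else 0)\<bar> \<le> (\<Sum>k\<in>UNIV. \<bar>P$i$k\<bar> * d)"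
      unfolding entry abs_minus_cancel
      by (rule order_trans [OF sum_abs sum_mono]) (simp add: abs_mult M mult_left_mono)
    then show ?thesis by (simp add: rowsum_def sum_distrib_left mult.commute)
  qed
  have "rowsum i \<le> 2" for i
  proof -
    have "\<bar>P$i$j\<bar> \<le> (if i = j then 1 else 0) + d * rowsum i" for j
      using entry_le [of i j] by (auto simp: abs_le_iff abs_diff_le_iff split: if_splits)
    then have "(\<Sum>j\<in>UNIV. \<bar>P$i$j\<bar>) \<le> (\<Sum>j\<in>UNIV. (if i = j then 1 else 0) + d * rowsum i)"
      by (intro sum_mono)
    then have "rowsum i \<le> (\<Sum>j\<in>UNIV. (if i = j then 1 else 0) + d * rowsum i)"
      by (simp only: rowsum_def)
    also have "\<dots> = 1 + real CARD('n) * d * rowsum i" by (simp add: sum.distrib)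
    also have "\<dots> \<le> 1 + rowsum i / 2"
      using d mult_right_mono [of "real CARD('n) * d" "1/2" "rowsum i"]
      by (simp add: rowsum_def sum_nonneg)
    finally show ?thesis by simp
  qed
  then show ?thesis
    using entry_le [of i j] d mult_left_mono [of "rowsum i" 2 d] by (simp add: P_def mult.commute)
qed

lemma abs_christoffel_le:
  fixes sig :: "real^'n \<Rightarrow> real^'n^'n"
  assumes "\<And>k l. \<bar>sinv sig x k l\<bar> \<le> c" "\<And>i j k. \<bar>dsig x i j k\<bar> \<le> e"
  shows "\<bar>christoffel sig dsig x k i j\<bar> \<le> 3/2 * real CARD('n) * c * e"
proof -
  have "\<bar>sinv sig x k l * (dsig x j l i + dsig x i l j - dsig x i j l)\<bar> \<le> c * (3 * e)" for l
  proof -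
    have "\<bar>dsig x j l i + dsig x i l j - dsig x i j l\<bar> \<le> 3 * e"
      using assms(2) [of j l i] assms(2) [of i l j] assms(2) [of i j l] by linarith
    then show ?thesis
      unfolding abs_mult using assms(1) [of k l]
      by (intro mult_mono) (auto intro: order_trans [OF abs_ge_zero])
  qed
  then have "\<bar>\<Sum>l\<in>UNIV. sinv sig x k l * (dsig x j l i + dsig x i l j - dsig x i j l)\<bar>
      \<le> real CARD('n) * (c * (3 * e))"
    by (rule abs_sum_le_card_mult)
  then show ?thesis unfolding christoffel_def by (simp add: abs_mult)
qed

lemma asymptotically_flat_eventually_close:
  fixes sig :: "real^'n \<Rightarrow> real^'n^'n"
  assumes "asymptotically_flat sig dsig" "0 < \<delta>"
  obtains R0 where "R0 > R" "R0 > 0"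
    and "\<And>x i j. norm x \<ge> R0 \<Longrightarrow> \<bar>sig x $ i $ j - (if i = j then 1 else 0)\<bar> \<le> \<delta>"
    and "\<And>x i j k. norm x \<ge> R0 \<Longrightarrow> \<bar>dsig x i j k\<bar> \<le> \<delta> / norm x"
proof -
  obtain \<omega> :: "real \<Rightarrow> real" and C R1 where \<omega>: "(\<omega> \<longlongrightarrow> 0) at_top"
    and AF: "\<And>x. norm x \<ge> R1 \<Longrightarrow>
      (\<forall>i j. \<bar>sig x $ i $ j - (if i = j then 1 else 0)\<bar> \<le> C * \<omega> (norm x)) \<and>
      (\<forall>i j k. \<bar>dsig x i j k\<bar> \<le> C * \<omega> (norm x) / norm x)"
    using assms(1) unfolding asymptotically_flat_def by blast
  obtain T where T: "\<And>t. t \<ge> T \<Longrightarrow> C * \<omega> t < \<delta>"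
    using order_tendstoD(2) [OF tendsto_mult_right_zero [OF \<omega>, of C] assms(2)]
    unfolding eventually_at_top_linorder by blast
  define R0 where "R0 = max (R + 1) (max R1 (max T 1))"
  have far: "R1 \<le> norm x" "C * \<omega> (norm x) \<le> \<delta>" "0 < norm x" if "norm x \<ge> R0" for x :: "real^'n"
    using that T [of "norm x"] unfolding R0_def by auto
  show thesis
  proof
    show "R0 > R" "R0 > 0"
      unfolding R0_def by auto
  next
    fix x :: "real^'n" and i j
    assume "norm x \<ge> R0"
    then show "\<bar>sig x $ i $ j - (if i = j then 1 else 0)\<bar> \<le> \<delta>"
      using AF far by (meson order_trans)
  next
    fix x :: "real^'n" and i j k
    assume "norm x \<ge> R0"
    then show "\<bar>dsig x i j k\<bar> \<le> \<delta> / norm x"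
      using AF far by (meson divide_right_mono less_imp_le order_trans)
  qed
qed

lemma asymptotically_flat_near_euclidean:
  fixes sig :: "real^'n \<Rightarrow> real^'n^'n"
  assumes metric: "riemannian_metric_outside R sig dsig"
    and flat: "asymptotically_flat sig dsig" and "\<epsilon> > 0"
  obtains R0 where "R0 > R" "R0 > 0"
    and "\<And>x i j. norm x \<ge> R0 \<Longrightarrow> \<bar>sinv sig x i j - (if i = j then 1 else 0)\<bar> \<le> \<epsilon>"
    and "\<And>x k i j. norm x \<ge> R0 \<Longrightarrow> \<bar>christoffel sig dsig x k i j\<bar> \<le> \<epsilon> / norm x"
proof -
  let ?N = "real CARD('n)"
  define \<delta> where "\<delta> = min \<epsilon> 1 / (3 * ?N)"
  have "0 < \<delta>" "3 * ?N * \<delta> = min \<epsilon> 1"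
    using \<open>\<epsilon> > 0\<close> unfolding \<delta>_def by auto
  moreover have "\<delta> \<le> ?N * \<delta>"
    using one_le_card_real [where 'n='n] \<open>0 < \<delta>\<close> by simp
  ultimately have \<delta>: "0 < \<delta>" "2 * \<delta> \<le> \<epsilon>" "3 * ?N * \<delta> \<le> \<epsilon>" "?N * \<delta> \<le> 1/2" "\<delta> \<le> 1/2"
    by linarith+
  obtain R0 where "R0 > R" "R0 > 0"
    and sig: "\<And>x i j. norm x \<ge> R0 \<Longrightarrow> \<bar>sig x $ i $ j - (if i = j then 1 else 0)\<bar> \<le> \<delta>"
    and dsig: "\<And>x i j k. norm x \<ge> R0 \<Longrightarrow> \<bar>dsig x i j k\<bar> \<le> \<delta> / norm x"
    using asymptotically_flat_eventually_close [OF flat \<open>0 < \<delta>\<close>] by blast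
  have sinv: "\<bar>sinv sig x i j - (if i = j then 1 else 0)\<bar> \<le> 2 * \<delta>" if x: "norm x \<ge> R0" for x i j
  proof -
    have "invertible (sig x)"
      using metric x \<open>R0 > R\<close> unfolding riemannian_metric_outside_def
      by (intro invertible_if_pos_def) auto
    then show ?thesis
      unfolding sinv_def by (rule matrix_inv_near_identity) (use sig [OF x] \<delta> in auto)
  qed
  have "\<bar>christoffel sig dsig x k i j\<bar> \<le> \<epsilon> / norm x" if x: "norm x \<ge> R0" for x k i j
  proof -
    have "\<bar>sinv sig x k l\<bar> \<le> 2" for k l
      using sinv [OF x, of k l] \<delta> by (auto split: if_splits)
    then have "\<bar>christoffel sig dsig x k i j\<bar> \<le> 3/2 * ?N * 2 * (\<delta> / norm x)"
      using dsig [OF x] by (rule abs_christoffel_le)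
    also have "\<dots> \<le> \<epsilon> / norm x"
      using \<delta>(3) x \<open>R0 > 0\<close> by (simp add: divide_right_mono)
    finally show ?thesis .
  qed
  then show thesis
    using that \<open>R0 > R\<close> \<open>R0 > 0\<close> sinv \<delta>(2) by (meson order_trans)
qed

definition quad_form :: "('n::finite \<Rightarrow> 'n \<Rightarrow> real) \<Rightarrow> ('n \<Rightarrow> real) \<Rightarrow> real" where
  "quad_form S p = (\<Sum>k\<in>UNIV. \<Sum>l\<in>UNIV. S k l * p k * p l)"

definition graph_metric_inv ::
  "('n::finite \<Rightarrow> 'n \<Rightarrow> real) \<Rightarrow> ('n \<Rightarrow> real) \<Rightarrow> 'n \<Rightarrow> 'n \<Rightarrow> real" where
  "graph_metric_inv S p i j =
     S i j + (\<Sum>k\<in>UNIV. \<Sum>l\<in>UNIV. S i k * S j l * p k * p l) / (1 - quad_form S p)"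

lemma sq_norm_sig_eq_quad_form: "sq_norm_sig sig x p = quad_form (sinv sig x) (($) p)"
  by (simp add: sq_norm_sig_def quad_form_def)

lemma static_operator_eq_graph_metric_inv:
  "static_operator sig dsig x p H =
     (\<Sum>i\<in>UNIV. \<Sum>j\<in>UNIV. graph_metric_inv (sinv sig x) (($) p) i j *
        (H$i$j - (\<Sum>k\<in>UNIV. christoffel sig dsig x k i j * p$k)))"
  by (simp add: static_operator_def g_inv_def graph_metric_inv_def sig_hessian_def
      quad_form_def sq_norm_sig_def)

lemma quad_form_near_identity:
  fixes S :: "'n::finite \<Rightarrow> 'n \<Rightarrow> real"
  assumes S: "\<And>k l. \<bar>S k l - (if k = l then 1 else 0)\<bar> \<le> \<eta>" and p: "\<And>k. \<bar>p k\<bar> \<le> c"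
  shows "\<bar>quad_form S p - (\<Sum>k\<in>UNIV. p k * p k)\<bar> \<le> real CARD('n)^2 * (\<eta> * c^2)"
proof -
  have "quad_form S p - (\<Sum>k\<in>UNIV. p k * p k) =
      quad_form S p - (\<Sum>k\<in>UNIV. \<Sum>l\<in>UNIV. (if k = l then 1 else 0) * (p k * p l))"
    by (simp only: sum_kronecker_diag)
  also have "\<dots> = (\<Sum>k\<in>UNIV. \<Sum>l\<in>UNIV. (S k l - (if k = l then 1 else 0)) * p k * p l)"
    by (simp add: quad_form_def left_diff_distrib sum_subtractf mult.assoc)
  also have "\<bar>\<dots>\<bar> \<le> real CARD('n)^2 * (\<eta> * c^2)"
  proof (rule abs_double_sum_le_card_mult)
    fix k l
    have "0 \<le> \<eta>" "0 \<le> c"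
      using S [of k l] p [of k] by (meson abs_ge_zero order_trans)+
    then have "\<bar>(S k l - (if k = l then 1 else 0)) * p k * p l\<bar> \<le> \<eta> * c * c"
      unfolding abs_mult using S p by (intro mult_mono) auto
    then show "\<bar>(S k l - (if k = l then 1 else 0)) * p k * p l\<bar> \<le> \<eta> * c^2"
      by (simp add: power2_eq_square)
  qed
  finally show ?thesis .
qed

lemma sum_mult_near_identity:
  fixes S :: "'n::finite \<Rightarrow> 'n \<Rightarrow> real"
  assumes S: "\<And>k l. \<bar>S k l - (if k = l then 1 else 0)\<bar> \<le> \<eta>" and p: "\<And>k. \<bar>p k\<bar> \<le> c"
  shows "\<bar>(\<Sum>k\<in>UNIV. S i k * p k) - p i\<bar> \<le> real CARD('n) * (\<eta> * c)"
proof -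
  have "(\<Sum>k\<in>UNIV. S i k * p k) - p i = (\<Sum>k\<in>UNIV. (S i k - (if i = k then 1 else 0)) * p k)"
    by (simp add: left_diff_distrib sum_subtractf mult_if_delta)
  also have "\<bar>\<dots>\<bar> \<le> real CARD('n) * (\<eta> * c)"
  proof (rule abs_sum_le_card_mult)
    fix k
    show "\<bar>(S i k - (if i = k then 1 else 0)) * p k\<bar> \<le> \<eta> * c"
      unfolding abs_mult using S p by (intro mult_mono) (auto intro: order_trans [OF abs_ge_zero])
  qed
  finally show ?thesis .
qed

lemma sum_mult_products_near_identity:
  fixes S :: "'n::finite \<Rightarrow> 'n \<Rightarrow> real"
  assumes S: "\<And>k l. \<bar>S k l - (if k = l then 1 else 0)\<bar> \<le> \<eta>"
    and \<eta>: "real CARD('n) * \<eta> \<le> 1/100"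
    and p: "\<And>k. \<bar>p k\<bar> \<le> q" and q: "q \<le> 1/2"
  shows "\<bar>(\<Sum>k\<in>UNIV. S i k * p k) * (\<Sum>l\<in>UNIV. S j l * p l) - p i * p j\<bar>
    \<le> 3/4 * (real CARD('n) * \<eta>)"
proof -
  let ?N = "real CARD('n)"
  define v where "v i = (\<Sum>k\<in>UNIV. S i k * p k)" for i
  have "0 \<le> \<eta>" "0 \<le> q"
    using S [of i i] p [of i] by (meson abs_ge_zero order_trans)+
  have v: "\<bar>v i - p i\<bar> \<le> ?N * \<eta> * q" for i
    using sum_mult_near_identity [of S \<eta> p q i, OF S p] by (simp add: v_def mult.assoc)
  have "?N * \<eta> * q \<le> q"
    using mult_right_mono [of "?N * \<eta>" 1 q] \<eta> \<open>0 \<le> q\<close> by linarith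
  then have v_le: "\<bar>v i\<bar> \<le> 2 * q" for i
    using v [of i] p [of i] abs_triangle_ineq [of "v i - p i" "p i"] by linarith
  have "v i * v j - p i * p j = (v i - p i) * v j + p i * (v j - p j)"
    by (simp add: algebra_simps)
  then have "\<bar>v i * v j - p i * p j\<bar> \<le> \<bar>v i - p i\<bar> * \<bar>v j\<bar> + \<bar>p i\<bar> * \<bar>v j - p j\<bar>"
    by (metis abs_mult abs_triangle_ineq)
  also have "\<dots> \<le> (?N * \<eta> * q) * (2 * q) + q * (?N * \<eta> * q)"
    using v v_le p \<open>0 \<le> q\<close> \<open>0 \<le> \<eta>\<close> by (intro add_mono mult_mono) auto
  also have "\<dots> = 3 * (?N * \<eta>) * q^2"
    by (simp add: power2_eq_square algebra_simps)
  also have "\<dots> \<le> 3/4 * (?N * \<eta>)"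
    using mult_left_mono [OF small_slope_bounds(1) [OF \<open>0 \<le> q\<close> q], of "3 * (?N * \<eta>)"] \<open>0 \<le> \<eta>\<close>
    by simp
  finally show ?thesis
    unfolding v_def .
qed

lemma graph_metric_inv_near_flat:
  fixes S :: "'n::finite \<Rightarrow> 'n \<Rightarrow> real" and p :: "'n \<Rightarrow> real"
  assumes S: "\<And>k l. \<bar>S k l - (if k = l then 1 else 0)\<bar> \<le> \<eta>"
    and \<eta>: "real CARD('n)^2 * \<eta> \<le> 1/100"
    and p: "\<And>k. \<bar>p k\<bar> \<le> q" "(\<Sum>k\<in>UNIV. p k * p k) = q^2"
    and q: "q \<le> 1/2"
  shows "quad_form S p < 1"
    and "\<bar>graph_metric_inv S p i j - ((if i = j then 1 else 0) + p i * p j / (1 - q^2))\<bar>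
      \<le> 3 * real CARD('n)^2 * \<eta>"
proof -
  let ?N = "real CARD('n)"
  define D where "D = 1 - quad_form S p"
  have "0 \<le> \<eta>" "0 \<le> q"
    using S [of i i] p(1) [of i] by (meson abs_ge_zero order_trans)+
  have N\<eta>: "\<eta> \<le> ?N * \<eta>" "?N * \<eta> \<le> ?N^2 * \<eta>"
    using mult_right_mono [OF one_le_card_real, of \<eta>] \<open>0 \<le> \<eta>\<close>
      mult_right_mono [OF one_le_card_real, of "?N * \<eta>"]
    by (simp_all add: power2_eq_square mult.assoc)
  have q2: "q^2 \<le> 1/4"
    using \<open>0 \<le> q\<close> q by (rule small_slope_bounds)
  have "\<bar>quad_form S p - q^2\<bar> \<le> ?N^2 * \<eta> * q^2"
    using quad_form_near_identity [of S \<eta> p q, OF S p(1)] p(2) by (simp add: mult.assoc)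
  moreover have "?N^2 * \<eta> * q^2 \<le> ?N^2 * \<eta> / 4"
    using mult_left_mono [OF q2, of "?N^2 * \<eta>"] \<open>0 \<le> \<eta>\<close> by simp
  ultimately have D: "\<bar>(1 - q^2) - D\<bar> \<le> ?N^2 * \<eta> / 4" "7/10 \<le> D"
    using \<eta> q2 unfolding D_def by linarith+
  then show "quad_form S p < 1"
    unfolding D_def by linarith
  have "(\<Sum>k\<in>UNIV. \<Sum>l\<in>UNIV. S i k * S j l * p k * p l) =
      (\<Sum>k\<in>UNIV. S i k * p k) * (\<Sum>l\<in>UNIV. S j l * p l)"
    unfolding sum_product by (intro sum.cong refl) (simp add: algebra_simps)
  then have g: "graph_metric_inv S p i j = S i j + (\<Sum>k\<in>UNIV. S i k * p k) * (\<Sum>l\<in>UNIV. S j l * p l) / D"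
    by (simp add: graph_metric_inv_def D_def)
  have "\<bar>(\<Sum>k\<in>UNIV. S i k * p k) * (\<Sum>l\<in>UNIV. S j l * p l) - p i * p j\<bar> \<le> 3/4 * (?N * \<eta>)"
    using N\<eta> \<eta> by (intro sum_mult_products_near_identity [OF S _ p(1) q]) linarith
  moreover have "\<bar>(\<Sum>k\<in>UNIV. S i k * p k) * (\<Sum>l\<in>UNIV. S j l * p l) / D - p i * p j / (1 - q^2)\<bar>
      \<le> \<bar>(\<Sum>k\<in>UNIV. S i k * p k) * (\<Sum>l\<in>UNIV. S j l * p l) - p i * p j\<bar> / (7/10)
        + \<bar>p i * p j\<bar> * \<bar>(1 - q^2) - D\<bar> / (7/10 * (3/4))"
    using D q2 by (intro abs_divide_diff_le) auto
  moreover have "\<bar>p i * p j\<bar> * \<bar>(1 - q^2) - D\<bar> \<le> 1/4 * (?N^2 * \<eta> / 4)"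
    using mult_mono [OF p(1) [of i] p(1) [of j]] q2 \<open>0 \<le> q\<close> D(1)
    by (intro mult_mono) (auto simp: abs_mult power2_eq_square)
  ultimately show "\<bar>graph_metric_inv S p i j - ((if i = j then 1 else 0) + p i * p j / (1 - q^2))\<bar>
      \<le> 3 * ?N^2 * \<eta>"
    using g S [of i j] N\<eta> by (simp add: abs_le_iff)
qed

lemma abs_le_one_if_sum_squares_eq_one:
  fixes u :: "'n::finite \<Rightarrow> real"
  assumes "(\<Sum>k\<in>UNIV. u k * u k) = 1"
  shows "\<bar>u k\<bar> \<le> 1"
proof -
  have "u k * u k \<le> (\<Sum>k\<in>UNIV. u k * u k)"
    by (rule member_le_sum) auto
  then show ?thesis
    using assms abs_square_le_1 [of "u k"] by (simp add: power2_eq_square)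
qed

lemma graph_metric_inv_radial_near_flat:
  fixes S :: "'n::finite \<Rightarrow> 'n \<Rightarrow> real" and u p :: "'n \<Rightarrow> real"
  assumes S: "\<And>k l. \<bar>S k l - (if k = l then 1 else 0)\<bar> \<le> \<epsilon>"
    and \<epsilon>: "real CARD('n)^2 * \<epsilon> \<le> 1/100"
    and u: "(\<Sum>k\<in>UNIV. u k * u k) = 1"
    and q: "0 \<le> q" "q \<le> 1/2" and p: "\<And>k. p k = - q * u k"
  shows "quad_form S p < 1"
    and "\<bar>graph_metric_inv S p i j - ((if i = j then 1 else 0) + q^2 / (1 - q^2) * (u i * u j))\<bar>
      \<le> 3 * real CARD('n)^2 * \<epsilon>"
    and "\<bar>graph_metric_inv S p i j\<bar> \<le> 4"
proof -
  have p_le: "\<bar>p k\<bar> \<le> q" for k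
    using mult_left_mono [OF abs_le_one_if_sum_squares_eq_one [OF u] q(1)] q(1)
    by (simp add: p abs_mult)
  have "(\<Sum>k\<in>UNIV. p k * p k) = q^2 * (\<Sum>k\<in>UNIV. u k * u k)"
    by (simp add: p sum_distrib_left power2_eq_square algebra_simps)
  then have "(\<Sum>k\<in>UNIV. p k * p k) = q^2"
    using u by simp
  note flat = graph_metric_inv_near_flat [of S \<epsilon> p q, OF S \<epsilon> p_le this q(2)]
  show "quad_form S p < 1"
    by (rule flat(1))
  show g_near: "\<bar>graph_metric_inv S p i j - ((if i = j then 1 else 0) + q^2 / (1 - q^2) * (u i * u j))\<bar>
      \<le> 3 * real CARD('n)^2 * \<epsilon>"
    using flat(2) [of i j] by (simp add: p power2_eq_square algebra_simps)
  define g0 where "g0 = (if i = j then 1 else 0) + q^2 / (1 - q^2) * (u i * u j)"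
  have "\<bar>u i * u j\<bar> \<le> 1"
    using abs_le_one_if_sum_squares_eq_one [OF u] by (simp add: abs_mult mult_le_one)
  then have "\<bar>q^2 / (1 - q^2) * (u i * u j)\<bar> \<le> 1/3"
    using small_slope_bounds [OF q] mult_mono [of "q^2 / (1 - q^2)" "1/3" "\<bar>u i * u j\<bar>" 1]
    by (simp add: abs_mult)
  moreover have "\<bar>(if i = j then 1 else 0) + d\<bar> \<le> 4/3" if "\<bar>d\<bar> \<le> 1/3" for d :: real
    using that by (auto simp: abs_le_iff)
  ultimately have "\<bar>g0\<bar> \<le> 4/3"
    unfolding g0_def by blast
  moreover have "3 * real CARD('n)^2 * \<epsilon> \<le> 3/100"
    using mult_left_mono [OF \<epsilon>, of 3] by (simp add: mult.assoc)
  ultimately show "\<bar>graph_metric_inv S p i j\<bar> \<le> 4"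
    using g_near [folded g0_def] abs_triangle_ineq2 [of "graph_metric_inv S p i j" g0] by linarith
qed

lemma abs_radial_matrix_le:
  fixes u :: "'n::finite \<Rightarrow> real"
  assumes u: "(\<Sum>k\<in>UNIV. u k * u k) = 1" and \<alpha>: "0 \<le> \<alpha>" "\<alpha> \<le> 1"
  shows "\<bar>(\<alpha> + 2) * u i * u j - (if i = j then 1 else 0)\<bar> \<le> 4"
proof -
  have "\<bar>u i * u j\<bar> \<le> 1"
    using abs_le_one_if_sum_squares_eq_one [OF u] by (simp add: abs_mult mult_le_one)
  then have "\<bar>(\<alpha> + 2) * (u i * u j)\<bar> \<le> 3"
    using \<alpha> mult_mono [of "\<alpha> + 2" 3 "\<bar>u i * u j\<bar>" 1] by (simp add: abs_mult)
  moreover have "\<bar>(\<alpha> + 2) * u i * u j - (if i = j then 1 else 0)\<bar>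
      \<le> \<bar>(\<alpha> + 2) * (u i * u j)\<bar> + \<bar>if i = j then 1 else 0\<bar>"
    by (metis abs_triangle_ineq4 mult.assoc)
  moreover have "\<bar>if i = j then 1 else 0\<bar> \<le> (1::real)"
    by simp
  ultimately show ?thesis
    by linarith
qed

lemma radial_matrix_contraction:
  fixes u :: "'n::finite \<Rightarrow> real"
  assumes u: "(\<Sum>k\<in>UNIV. u k * u k) = 1"
  shows "(\<Sum>i\<in>UNIV. \<Sum>j\<in>UNIV. ((if i = j then 1 else 0) + c * (u i * u j)) *
      ((\<alpha> + 2) * u i * u j - (if i = j then 1 else 0))) = \<alpha> + 2 - real CARD('n) + c * (\<alpha> + 1)"
proof -
  define K where "K i j = (\<alpha> + 2) * u i * u j - (if i = j then 1 else 0)" for i j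
  have trace: "(\<Sum>i\<in>UNIV. \<Sum>j\<in>UNIV. (if i = j then 1 else 0) * K i j) = \<alpha> + 2 - real CARD('n)"
  proof -
    have "(\<Sum>i\<in>UNIV. \<Sum>j\<in>UNIV. (if i = j then 1 else 0) * K i j) = (\<Sum>i\<in>UNIV. (\<alpha> + 2) * (u i * u i) - 1)"
      by (simp add: sum_kronecker_diag K_def mult.assoc)
    also have "\<dots> = \<alpha> + 2 - real CARD('n)"
      by (simp add: sum_subtractf sum_distrib_left [symmetric] u)
    finally show ?thesis .
  qed
  have radial: "(\<Sum>i\<in>UNIV. \<Sum>j\<in>UNIV. u i * u j * K i j) = \<alpha> + 1"
  proof -
    have "(\<Sum>i\<in>UNIV. \<Sum>j\<in>UNIV. u i * u j * K i j) =
        (\<Sum>i\<in>UNIV. \<Sum>j\<in>UNIV. (\<alpha> + 2) * ((u i * u i) * (u j * u j))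
          - (if i = j then 1 else 0) * (u i * u j))"
      by (intro sum.cong refl) (simp add: K_def algebra_simps)
    also have "\<dots> = (\<alpha> + 2) * ((\<Sum>i\<in>UNIV. u i * u i) * (\<Sum>j\<in>UNIV. u j * u j))
        - (\<Sum>i\<in>UNIV. \<Sum>j\<in>UNIV. (if i = j then 1 else 0) * (u i * u j))"
      by (simp only: sum_product) (simp only: sum_subtractf sum_distrib_left)
    finally show ?thesis
      by (simp add: sum_kronecker_diag u)
  qed
  have "(\<Sum>i\<in>UNIV. \<Sum>j\<in>UNIV. ((if i = j then 1 else 0) + c * (u i * u j)) * K i j) =
      (\<Sum>i\<in>UNIV. \<Sum>j\<in>UNIV. (if i = j then 1 else 0) * K i j)
      + c * (\<Sum>i\<in>UNIV. \<Sum>j\<in>UNIV. u i * u j * K i j)"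
    unfolding sum_distrib_left sum.distrib [symmetric]
    by (intro sum.cong refl) (simp add: algebra_simps)
  also have "\<dots> = \<alpha> + 2 - real CARD('n) + c * (\<alpha> + 1)"
    unfolding trace radial ..
  finally show ?thesis
    unfolding K_def by simp
qed

lemma flat_radial_operator_le:
  fixes u :: "'n::finite \<Rightarrow> real"
  assumes N3: "CARD('n) \<ge> 3" and u: "(\<Sum>k\<in>UNIV. u k * u k) = 1"
    and q: "0 \<le> q" "q \<le> 1/2" and \<alpha>: "0 \<le> \<alpha>" "\<alpha> \<le> 1/4"
  shows "(\<Sum>i\<in>UNIV. \<Sum>j\<in>UNIV. ((if i = j then 1 else 0) + q^2 / (1 - q^2) * (u i * u j)) *
      ((\<alpha> + 2) * u i * u j - (if i = j then 1 else 0))) \<le> - 1/3"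
proof -
  have "q^2 / (1 - q^2) * (\<alpha> + 1) \<le> 1/3 * (5/4)"
    using small_slope_bounds [OF q] \<alpha> by (intro mult_mono) auto
  moreover have "3 \<le> real CARD('n)"
    using N3 by simp
  ultimately show ?thesis
    unfolding radial_matrix_contraction [OF u] using \<alpha> by linarith
qed

lemma abs_christoffel_term_le:
  fixes g :: "'n::finite \<Rightarrow> 'n \<Rightarrow> real" and G :: "'n \<Rightarrow> 'n \<Rightarrow> 'n \<Rightarrow> real"
  assumes g: "\<And>i j. \<bar>g i j\<bar> \<le> c" and G: "\<And>k i j. \<bar>G k i j\<bar> * q \<le> \<epsilon> * Q"
    and p: "\<And>k. \<bar>p k\<bar> \<le> q"
  shows "\<bar>\<Sum>i\<in>UNIV. \<Sum>j\<in>UNIV. g i j * (\<Sum>k\<in>UNIV. G k i j * p k)\<bar>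
    \<le> real CARD('n)^2 * (c * (real CARD('n) * (\<epsilon> * Q)))"
proof (rule abs_double_sum_mult_le [OF g])
  fix i j
  show "\<bar>\<Sum>k\<in>UNIV. G k i j * p k\<bar> \<le> real CARD('n) * (\<epsilon> * Q)"
  proof (rule abs_sum_le_card_mult)
    fix k
    have "\<bar>G k i j\<bar> * \<bar>p k\<bar> \<le> \<bar>G k i j\<bar> * q"
      using p by (simp add: mult_left_mono)
    then show "\<bar>G k i j * p k\<bar> \<le> \<epsilon> * Q"
      using G [of k i j] by (simp add: abs_mult)
  qed
qed

lemma radial_static_operator_nonpos:
  fixes S :: "'n::finite \<Rightarrow> 'n \<Rightarrow> real" and G :: "'n \<Rightarrow> 'n \<Rightarrow> 'n \<Rightarrow> real"
  assumes N3: "CARD('n) \<ge> 3"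
    and S: "\<And>k l. \<bar>S k l - (if k = l then 1 else 0)\<bar> \<le> \<epsilon>"
    and G: "\<And>k i j. \<bar>G k i j\<bar> * q \<le> \<epsilon> * Q"
    and \<epsilon>: "real CARD('n)^4 * \<epsilon> \<le> 1/100"
    and u: "(\<Sum>k\<in>UNIV. u k * u k) = 1"
    and q: "0 \<le> q" "q \<le> 1/2" and Q: "0 \<le> Q" and \<alpha>: "0 \<le> \<alpha>" "\<alpha> \<le> 1/4"
    and p: "\<And>k. p k = - q * u k"
    and H: "\<And>i j. H i j = Q * ((\<alpha> + 2) * u i * u j - (if i = j then 1 else 0))"
  shows "quad_form S p < 1"
    and "(\<Sum>i\<in>UNIV. \<Sum>j\<in>UNIV. graph_metric_inv S p i j * (H i j - (\<Sum>k\<in>UNIV. G k i j * p k))) \<le> 0"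
proof -
  let ?N = "real CARD('n)"
  let ?g = "graph_metric_inv S p"
  define K where "K i j = (\<alpha> + 2) * u i * u j - (if i = j then 1 else 0)" for i j
  define g0 where "g0 i j = (if i = j then 1 else 0) + q^2 / (1 - q^2) * (u i * u j)" for i j
  define T where "T i j = (\<Sum>k\<in>UNIV. G k i j * p k)" for i j
  have "0 \<le> \<epsilon>"
    by (meson S abs_ge_zero order_trans)
  have "?N^2 \<le> ?N^4" "?N^3 \<le> ?N^4"
    using one_le_card_real [where 'n='n] by (simp_all add: power_increasing)
  then have \<epsilon>2: "?N^2 * \<epsilon> \<le> 1/100" and \<epsilon>3: "?N^3 * \<epsilon> \<le> 1/100"
    using \<epsilon> \<open>0 \<le> \<epsilon>\<close> mult_right_mono by (meson order_trans)+
  note graph = graph_metric_inv_radial_near_flat [OF S \<epsilon>2 u q p]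
  show "quad_form S p < 1"
    by (rule graph(1))
  have p_le: "\<bar>p k\<bar> \<le> q" for k
    using mult_left_mono [OF abs_le_one_if_sum_squares_eq_one [OF u] q(1)] q(1)
    by (simp add: p abs_mult)
  have split: "(\<Sum>i\<in>UNIV. \<Sum>j\<in>UNIV. ?g i j * (H i j - T i j)) =
      Q * (\<Sum>i\<in>UNIV. \<Sum>j\<in>UNIV. g0 i j * K i j)
      + Q * (\<Sum>i\<in>UNIV. \<Sum>j\<in>UNIV. (?g i j - g0 i j) * K i j)
      - (\<Sum>i\<in>UNIV. \<Sum>j\<in>UNIV. ?g i j * T i j)"
    unfolding H K_def [symmetric] sum_distrib_left sum_subtractf [symmetric] sum.distrib [symmetric]
    by (intro sum.cong refl) (simp add: algebra_simps)
  have "(\<Sum>i\<in>UNIV. \<Sum>j\<in>UNIV. g0 i j * K i j) \<le> - 1/3"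
    unfolding g0_def K_def by (rule flat_radial_operator_le [OF N3 u q \<alpha>])
  then have flat: "Q * (\<Sum>i\<in>UNIV. \<Sum>j\<in>UNIV. g0 i j * K i j) \<le> Q * (- 1/3)"
    using Q by (rule mult_left_mono)
  have "\<bar>\<Sum>i\<in>UNIV. \<Sum>j\<in>UNIV. (?g i j - g0 i j) * K i j\<bar> \<le> ?N^2 * (3 * ?N^2 * \<epsilon> * 4)"
    using graph(2) \<alpha> by (intro abs_double_sum_mult_le) (auto simp: g0_def K_def abs_radial_matrix_le [OF u])
  also have "\<dots> = 12 * (?N^4 * \<epsilon>)"
    by (simp add: eval_nat_numeral algebra_simps)
  finally have "(\<Sum>i\<in>UNIV. \<Sum>j\<in>UNIV. (?g i j - g0 i j) * K i j) \<le> 12/100"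
    using \<epsilon> by linarith
  then have metric_error: "Q * (\<Sum>i\<in>UNIV. \<Sum>j\<in>UNIV. (?g i j - g0 i j) * K i j) \<le> Q * (12/100)"
    using Q by (rule mult_left_mono)
  have "\<bar>\<Sum>i\<in>UNIV. \<Sum>j\<in>UNIV. ?g i j * T i j\<bar> \<le> ?N^2 * (4 * (?N * (\<epsilon> * Q)))"
    unfolding T_def using graph(3) G p_le by (rule abs_christoffel_term_le)
  also have "\<dots> = 4 * (?N^3 * \<epsilon>) * Q"
    by (simp add: eval_nat_numeral algebra_simps)
  also have "\<dots> \<le> 4 * (1/100) * Q"
    using \<epsilon>3 Q by (intro mult_right_mono) auto
  finally have christoffel_error: "\<bar>\<Sum>i\<in>UNIV. \<Sum>j\<in>UNIV. ?g i j * T i j\<bar> \<le> 4/100 * Q"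
    by simp
  show "(\<Sum>i\<in>UNIV. \<Sum>j\<in>UNIV. ?g i j * (H i j - (\<Sum>k\<in>UNIV. G k i j * p k))) \<le> 0"
    using split flat metric_error christoffel_error Q unfolding T_def by linarith
qed

lemma has_derivative_norm_powr:
  fixes x :: "'a::real_inner"
  assumes "x \<noteq> 0"
  shows "((\<lambda>y. norm y powr s) has_derivative (\<lambda>v. s * norm x powr (s - 2) * (x \<bullet> v))) (at x)"
proof -
  have "((\<lambda>y. norm y powr s) has_derivative
      (\<lambda>v. norm x powr s * (0 * ln (norm x) + (v \<bullet> sgn x) * s / norm x))) (at x)"
    using has_derivative_powr [OF has_derivative_norm [OF assms] has_derivative_const] assms
    by simp
  moreover have "norm x powr s * (0 * ln (norm x) + (v \<bullet> sgn x) * s / norm x)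
      = s * norm x powr (s - 2) * (x \<bullet> v)" for v
    using assms
    by (simp add: powr_diff sgn_div_norm inner_commute power2_eq_square field_simps)
  ultimately show ?thesis by simp
qed

definition norm_powr_grad :: "real \<Rightarrow> real^'n \<Rightarrow> real^'n" where
  "norm_powr_grad s y = (s * norm y powr (s - 2)) *\<^sub>R y"

definition norm_powr_hess :: "real \<Rightarrow> real^'n \<Rightarrow> real^'n^'n" where
  "norm_powr_hess s y = (\<chi> k l. s * ((s - 2) * norm y powr (s - 4) * y$k * y$l
      + (if k = l then norm y powr (s - 2) else 0)))"

lemma has_derivative_norm_powr_grad:
  fixes x :: "real^'n"
  assumes "x \<noteq> 0"
  shows "((\<lambda>y. norm y powr s) has_derivative (\<lambda>v. norm_powr_grad s x \<bullet> v)) (at x)"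
  using has_derivative_norm_powr [OF assms, of s] by (simp add: norm_powr_grad_def)

lemma has_derivative_norm_powr_hess:
  fixes x :: "real^'n"
  assumes "x \<noteq> 0"
  shows "((\<lambda>y. norm_powr_grad s y $ k) has_derivative
      (\<lambda>v. \<Sum>l\<in>UNIV. norm_powr_hess s x $ k $ l * v $ l)) (at x)"
proof -
  have "((\<lambda>y. s * (norm y powr (s - 2) * y $ k)) has_derivative
      (\<lambda>v. s * (norm x powr (s - 2) * v $ k + (s - 2) * norm x powr (s - 2 - 2) * (x \<bullet> v) * x $ k)))
      (at x)"
    by (rule has_derivative_mult_right, rule has_derivative_mult [OF has_derivative_norm_powr [OF assms]
        bounded_linear.has_derivative [OF bounded_linear_vec_nth has_derivative_ident]])
  moreover have "s * (norm x powr (s - 2) * v $ k + (s - 2) * norm x powr (s - 2 - 2) * (x \<bullet> v) * x $ k)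
      = (\<Sum>l\<in>UNIV. norm_powr_hess s x $ k $ l * v $ l)" for v
  proof -
    have "(\<Sum>l\<in>UNIV. norm_powr_hess s x $ k $ l * v $ l)
        = (\<Sum>l\<in>UNIV. s * (s - 2) * norm x powr (s - 4) * x $ k * (x $ l * v $ l)
            + (if k = l then s * norm x powr (s - 2) * v $ l else 0))"
      by (intro sum.cong refl) (simp add: norm_powr_hess_def algebra_simps)
    also have "\<dots> = s * (s - 2) * norm x powr (s - 4) * x $ k * (\<Sum>l\<in>UNIV. x $ l * v $ l)
        + s * norm x powr (s - 2) * v $ k"
      by (simp add: sum.distrib sum_distrib_left)
    finally have "(\<Sum>l\<in>UNIV. norm_powr_hess s x $ k $ l * v $ l)
        = s * (s - 2) * norm x powr (s - 4) * x $ k * (\<Sum>l\<in>UNIV. x $ l * v $ l)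
          + s * norm x powr (s - 2) * v $ k" .
    then show ?thesis
      by (simp add: inner_vec_def algebra_simps)
  qed
  ultimately show ?thesis
    by (simp add: norm_powr_grad_def mult.assoc)
qed

lemma has_derivative_scaled_norm_powr:
  fixes x :: "real^'n"
  assumes "x \<noteq> 0"
  shows "((\<lambda>y. A * norm y powr s) has_derivative (\<lambda>v. (A *\<^sub>R norm_powr_grad s x) \<bullet> v)) (at x)"
    and "((\<lambda>y. (A *\<^sub>R norm_powr_grad s y) $ k) has_derivative
      (\<lambda>v. \<Sum>l\<in>UNIV. (A *\<^sub>R norm_powr_hess s x) $ k $ l * v $ l)) (at x)"
proof -
  have "((\<lambda>y. A * norm y powr s) has_derivative (\<lambda>v. A * (norm_powr_grad s x \<bullet> v))) (at x)"
    using assms by (intro has_derivative_mult_right has_derivative_norm_powr_grad)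
  then show "((\<lambda>y. A * norm y powr s) has_derivative (\<lambda>v. (A *\<^sub>R norm_powr_grad s x) \<bullet> v)) (at x)"
    by simp
  have "((\<lambda>y. A * norm_powr_grad s y $ k) has_derivative
      (\<lambda>v. A * (\<Sum>l\<in>UNIV. norm_powr_hess s x $ k $ l * v $ l))) (at x)"
    using assms by (intro has_derivative_mult_right has_derivative_norm_powr_hess)
  then show "((\<lambda>y. (A *\<^sub>R norm_powr_grad s y) $ k) has_derivative
      (\<lambda>v. \<Sum>l\<in>UNIV. (A *\<^sub>R norm_powr_hess s x) $ k $ l * v $ l)) (at x)"
    by (simp add: sum_distrib_left mult.assoc)
qed

lemma norm_powr_grad_nth:
  fixes x :: "real^'n"
  assumes "x \<noteq> 0"
  shows "norm_powr_grad s x $ k = s * norm x powr (s - 1) * (x $ k / norm x)"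
proof -
  have "norm x powr (s - 1) = norm x powr (s - 2) * norm x"
    using powr_add [of "norm x" "s - 2" 1] assms by simp
  then show ?thesis
    using assms by (simp add: norm_powr_grad_def)
qed

lemma norm_powr_hess_nth:
  fixes x :: "real^'n"
  assumes "x \<noteq> 0"
  shows "norm_powr_hess s x $ k $ l = s * norm x powr (s - 2) *
    ((s - 2) * (x $ k / norm x) * (x $ l / norm x) + (if k = l then 1 else 0))"
proof -
  have "norm x powr (s - 2) = norm x powr (s - 4) * norm x ^ 2"
    using powr_add [of "norm x" "s - 4" 2] assms by simp
  then show ?thesis
    using assms by (simp add: norm_powr_hess_def power2_eq_square field_simps)
qed

lemma sum_sq_nth_div_norm:
  fixes x :: "real^'n"
  assumes "x \<noteq> 0"
  shows "(\<Sum>k\<in>UNIV. (x $ k / norm x) * (x $ k / norm x)) = 1"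
proof -
  have "(\<Sum>k\<in>UNIV. x $ k * x $ k) = (norm x)^2"
    by (metis dot_square_norm inner_vec_def inner_real_def)
  then show ?thesis
    using assms by (simp add: sum_divide_distrib [symmetric] power2_eq_square)
qed

lemma norm_powr_static_supersolution:
  fixes sig :: "real^'n \<Rightarrow> real^'n^'n" and x :: "real^'n"
  assumes N3: "CARD('n) \<ge> 3" and \<epsilon>: "real CARD('n)^4 * \<epsilon> \<le> 1/100"
    and S: "\<And>i j. \<bar>sinv sig x i j - (if i = j then 1 else 0)\<bar> \<le> \<epsilon>"
    and G: "\<And>k i j. \<bar>christoffel sig dsig x k i j\<bar> \<le> \<epsilon> / norm x"
    and "x \<noteq> 0" and \<alpha>: "0 \<le> \<alpha>" "\<alpha> \<le> 1/4" and "0 \<le> A"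
    and slope: "\<alpha> * A * norm x powr (- \<alpha> - 1) \<le> 1/2"
  shows "sq_norm_sig sig x (A *\<^sub>R norm_powr_grad (- \<alpha>) x) < 1"
    and "static_operator sig dsig x (A *\<^sub>R norm_powr_grad (- \<alpha>) x) (A *\<^sub>R norm_powr_hess (- \<alpha>) x) \<le> 0"
proof -
  define r where "r = norm x"
  define u where "u k = x $ k / r" for k
  define q where "q = \<alpha> * A * r powr (- \<alpha> - 1)"
  have "0 < r" "0 \<le> q"
    using \<open>x \<noteq> 0\<close> \<alpha> \<open>0 \<le> A\<close> unfolding r_def q_def by auto
  have "- \<alpha> - 1 = (- \<alpha> - 2) + 1"
    by simp
  then have "r powr (- \<alpha> - 1) = r powr (- \<alpha> - 2) * r"
    using \<open>0 < r\<close> by (simp only: powr_add powr_one)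
  then have Q: "q / r = \<alpha> * A * r powr (- \<alpha> - 2)"
    using \<open>0 < r\<close> by (simp add: q_def)
  have p: "(A *\<^sub>R norm_powr_grad (- \<alpha>) x) $ k = - q * u k" for k
    using norm_powr_grad_nth [OF \<open>x \<noteq> 0\<close>] by (simp add: q_def u_def r_def)
  have H: "(A *\<^sub>R norm_powr_hess (- \<alpha>) x) $ i $ j =
      q / r * ((\<alpha> + 2) * u i * u j - (if i = j then 1 else 0))" for i j
    using norm_powr_hess_nth [OF \<open>x \<noteq> 0\<close>] unfolding Q by (simp add: u_def r_def algebra_simps)
  have "\<bar>christoffel sig dsig x k i j\<bar> * q \<le> \<epsilon> / r * q" for k i j
    using G \<open>0 \<le> q\<close> unfolding r_def by (rule mult_right_mono)
  then have G': "\<bar>christoffel sig dsig x k i j\<bar> * q \<le> \<epsilon> * (q / r)" for k i j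
    by simp
  have u: "(\<Sum>k\<in>UNIV. u k * u k) = 1"
    unfolding u_def r_def using \<open>x \<noteq> 0\<close> by (rule sum_sq_nth_div_norm)
  have "q \<le> 1/2" "0 \<le> q / r"
    using slope \<open>0 \<le> q\<close> \<open>0 < r\<close> unfolding q_def r_def by simp_all
  note radial = radial_static_operator_nonpos
    [where p = "\<lambda>k. (A *\<^sub>R norm_powr_grad (- \<alpha>) x) $ k"
      and H = "\<lambda>i j. (A *\<^sub>R norm_powr_hess (- \<alpha>) x) $ i $ j",
     OF N3 S G' \<epsilon> u \<open>0 \<le> q\<close> \<open>q \<le> 1/2\<close> \<open>0 \<le> q / r\<close> \<alpha> p H]
  show "sq_norm_sig sig x (A *\<^sub>R norm_powr_grad (- \<alpha>) x) < 1"
    unfolding sq_norm_sig_eq_quad_form by (rule radial(1))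
  show "static_operator sig dsig x (A *\<^sub>R norm_powr_grad (- \<alpha>) x) (A *\<^sub>R norm_powr_hess (- \<alpha>) x) \<le> 0"
    unfolding static_operator_eq_graph_metric_inv by (rule radial(2))
qed

lemma power_barrier_parameters:
  fixes r0 h :: real
  assumes "0 < r0" "0 < h"
  obtains \<alpha> A where "0 < \<alpha>" "\<alpha> \<le> 1/4" "0 < A" "A * r0 powr (- \<alpha>) = h"
    and "\<And>r. r0 \<le> r \<Longrightarrow> \<alpha> * A * r powr (- \<alpha> - 1) \<le> 1/2"
proof -
  define \<alpha> where "\<alpha> = min (1/4) (r0 / (2 * h))"
  define A where "A = h * r0 powr \<alpha>"
  have \<alpha>: "0 < \<alpha>" "\<alpha> \<le> 1/4" "\<alpha> * h \<le> r0 / 2"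
    using assms unfolding \<alpha>_def by (auto simp: min_def field_simps)
  have "0 < A"
    using assms by (simp add: A_def)
  have "\<alpha> * A * r powr (- \<alpha> - 1) \<le> 1/2" if "r0 \<le> r" for r
  proof -
    have "\<alpha> * A * r powr (- \<alpha> - 1) \<le> \<alpha> * A * r0 powr (- \<alpha> - 1)"
      using that \<alpha> \<open>0 < A\<close> assms by (intro mult_left_mono powr_mono2') auto
    also have "\<dots> = \<alpha> * h / r0"
      using assms by (simp add: A_def powr_add [symmetric] powr_minus divide_inverse)
    also have "\<dots> \<le> 1/2"
      using \<alpha>(3) assms by (simp add: divide_le_eq)
    finally show ?thesis .
  qed
  moreover have "A * r0 powr (- \<alpha>) = h"
    using assms by (simp add: A_def mult.assoc powr_add [symmetric])
  ultimately show thesis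
    using that \<alpha> \<open>0 < A\<close> by blast
qed

lemma static_supersolution_barrier:
  fixes sig :: "real^'n \<Rightarrow> real^'n^'n" and dsig :: "real^'n \<Rightarrow> 'n \<Rightarrow> 'n \<Rightarrow> 'n \<Rightarrow> real"
  assumes N3: "CARD('n) \<ge> 3" and \<epsilon>: "real CARD('n)^4 * \<epsilon> \<le> 1/100"
    and S: "\<And>x i j. norm x \<ge> R0 \<Longrightarrow> \<bar>sinv sig x i j - (if i = j then 1 else 0)\<bar> \<le> \<epsilon>"
    and G: "\<And>x k i j. norm x \<ge> R0 \<Longrightarrow> \<bar>christoffel sig dsig x k i j\<bar> \<le> \<epsilon> / norm x"
    and "0 < R0" "R0 \<le> r0" "0 < h"
  shows "\<exists>(b::real^'n \<Rightarrow> real) (f::real \<Rightarrow> real) (Db::real^'n \<Rightarrow> real^'n) (D2b::real^'n \<Rightarrow> real^'n^'n).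
       (\<forall>x. norm x \<ge> r0 \<longrightarrow> b x = f (norm x)) \<and>
       (\<forall>x. norm x \<ge> r0 \<longrightarrow> b x > 0) \<and>
       (b \<longlongrightarrow> 0) at_infinity \<and>
       (\<forall>x. norm x = r0 \<longrightarrow> b x \<ge> h) \<and>
       (\<forall>x. norm x \<ge> r0 \<longrightarrow>
          (b has_derivative (\<lambda>v. Db x \<bullet> v)) (at x) \<and>
          (\<forall>k. ((\<lambda>y. Db y $ k) has_derivative (\<lambda>v. \<Sum>l\<in>UNIV. D2b x $ k $ l * v $ l)) (at x)) \<and>
          sq_norm_sig sig x (Db x) < 1 \<and>
          static_operator sig dsig x (Db x) (D2b x) \<le> 0)"
proof -
  have "0 < r0"
    using \<open>0 < R0\<close> \<open>R0 \<le> r0\<close> by linarith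
  then obtain \<alpha> A where \<alpha>: "0 < \<alpha>" "\<alpha> \<le> 1/4" and "0 < A"
    and boundary: "A * r0 powr (- \<alpha>) = h"
    and slope: "\<And>r. r0 \<le> r \<Longrightarrow> \<alpha> * A * r powr (- \<alpha> - 1) \<le> 1/2"
    using power_barrier_parameters \<open>0 < h\<close> by blast
  have far: "x \<noteq> 0" "R0 \<le> norm x" if "r0 \<le> norm x" for x :: "real^'n"
    using that \<open>0 < r0\<close> \<open>R0 \<le> r0\<close> by auto
  show ?thesis
  proof (intro exI [of _ "\<lambda>y. A * norm y powr (- \<alpha>)"] exI [of _ "\<lambda>t. A * t powr (- \<alpha>)"]
      exI [of _ "\<lambda>y. A *\<^sub>R norm_powr_grad (- \<alpha>) y"] exI [of _ "\<lambda>y. A *\<^sub>R norm_powr_hess (- \<alpha>) y"]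
      conjI allI impI)
    fix x :: "real^'n"
    assume "r0 \<le> norm x"
    then show "0 < A * norm x powr (- \<alpha>)"
      using far \<open>0 < A\<close> by simp
  next
    have "((\<lambda>y::real^'n. norm y powr (- \<alpha>)) \<longlongrightarrow> 0) at_infinity"
      using \<alpha>(1) filterlim_norm_at_top by (intro tendsto_neg_powr) auto
    then show "((\<lambda>y::real^'n. A * norm y powr (- \<alpha>)) \<longlongrightarrow> 0) at_infinity"
      using tendsto_mult_right_zero by blast
  next
    fix x :: "real^'n"
    assume "norm x = r0"
    then show "h \<le> A * norm x powr (- \<alpha>)"
      by (simp add: boundary)
  next
    fix x :: "real^'n" and k
    assume "r0 \<le> norm x"
    then have "x \<noteq> 0"
      by (rule far(1))
    then show "((\<lambda>y. A * norm y powr (- \<alpha>)) has_derivative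
        (\<lambda>v. (A *\<^sub>R norm_powr_grad (- \<alpha>) x) \<bullet> v)) (at x)"
      by (rule has_derivative_scaled_norm_powr(1))
    from \<open>x \<noteq> 0\<close> show "((\<lambda>y. (A *\<^sub>R norm_powr_grad (- \<alpha>) y) $ k) has_derivative
        (\<lambda>v. \<Sum>l\<in>UNIV. (A *\<^sub>R norm_powr_hess (- \<alpha>) x) $ k $ l * v $ l)) (at x)"
      by (rule has_derivative_scaled_norm_powr(2))
  next
    fix x :: "real^'n"
    assume "r0 \<le> norm x"
    with far show "sq_norm_sig sig x (A *\<^sub>R norm_powr_grad (- \<alpha>) x) < 1"
      and "static_operator sig dsig x (A *\<^sub>R norm_powr_grad (- \<alpha>) x) (A *\<^sub>R norm_powr_hess (- \<alpha>) x) \<le> 0"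
      using norm_powr_static_supersolution [OF N3 \<epsilon> S G _ _ _ _ slope] \<alpha> \<open>0 < A\<close> by auto
  qed simp
qed

theorem corollary3p2:
  fixes sig :: "real^'n \<Rightarrow> real^'n^'n"
    and dsig :: "real^'n \<Rightarrow> 'n \<Rightarrow> 'n \<Rightarrow> 'n \<Rightarrow> real"
    and R :: real
  assumes "CARD('n) \<ge> 3"
    and "riemannian_metric_outside R sig dsig"
    and "asymptotically_flat sig dsig"
  shows "\<forall>r1>0. \<exists>r0\<ge>r1. r0 > R \<and>
    (\<forall>h>0. \<exists>(b::real^'n \<Rightarrow> real) (f::real \<Rightarrow> real) (Db::real^'n \<Rightarrow> real^'n) (D2b::real^'n \<Rightarrow> real^'n^'n).
       (\<forall>x. norm x \<ge> r0 \<longrightarrow> b x = f (norm x)) \<and>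
       (\<forall>x. norm x \<ge> r0 \<longrightarrow> b x > 0) \<and>
       (b \<longlongrightarrow> 0) at_infinity \<and>
       (\<forall>x. norm x = r0 \<longrightarrow> b x \<ge> h) \<and>
       (\<forall>x. norm x \<ge> r0 \<longrightarrow>
          (b has_derivative (\<lambda>v. Db x \<bullet> v)) (at x) \<and>
          (\<forall>k. ((\<lambda>y. Db y $ k) has_derivative (\<lambda>v. \<Sum>l\<in>UNIV. D2b x $ k $ l * v $ l)) (at x)) \<and>
          sq_norm_sig sig x (Db x) < 1 \<and>
          static_operator sig dsig x (Db x) (D2b x) \<le> 0))"
proof -
  define \<epsilon> :: real where "\<epsilon> = 1 / (100 * real CARD('n)^4)"
  have "0 < \<epsilon>" and \<epsilon>: "real CARD('n)^4 * \<epsilon> \<le> 1/100"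
    unfolding \<epsilon>_def by auto
  obtain R0 where "R < R0" "0 < R0"
    and S: "\<And>x i j. norm x \<ge> R0 \<Longrightarrow> \<bar>sinv sig x i j - (if i = j then 1 else 0)\<bar> \<le> \<epsilon>"
    and G: "\<And>x k i j. norm x \<ge> R0 \<Longrightarrow> \<bar>christoffel sig dsig x k i j\<bar> \<le> \<epsilon> / norm x"
    using asymptotically_flat_near_euclidean [OF assms(2,3) \<open>0 < \<epsilon>\<close>] by blast
  note barrier = static_supersolution_barrier [OF assms(1) \<epsilon> S G \<open>0 < R0\<close>]
  show ?thesis
    apply (intro allI impI)
    subgoal for r1
      using barrier [of "max r1 R0"] \<open>R < R0\<close>
      by (intro exI [of _ "max r1 R0"] conjI allI impI) auto
    done
qed

end
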